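(* Let $V$ be a separable Banach space, $\alpha,\beta\in(0,1)$, $\lambda\in(0,1]$ with $\alpha(1+\beta)>1$ and $\beta+\lambda\le1$, and $A\in C^\alpha_tC^{\beta,\lambda}_V$. Suppose the YDE associated to $A$ admits a flow of homeomorphisms $\Phi$ which is spatially locally $\gamma$-Hölder continuous, for some $\gamma\in(0,1)$ with $\alpha\gamma(1+\beta)>1$. Then for any $x_0\in V$ there exists a unique solution in the class $C^\alpha_tV$ to $x_t=x_0+\int_0^tA(\mathrm{d} s,x_s)$, $t\in[0,T]$.
   Context: Fix $T>0$, $\Delta_2=\{(s,t):0\le s\le t\le T\}$. For $f:V\to V$, $R>0$: $\llbracket f\rrbracket_{\beta,R}=\sup_{x\ne y,\|x\|,\|y\|\le R}\|f(x)-f(y)\|/\|x-y\|^\beta$; $\llbracket f\rrbracket_{\beta,\lambda}=\sup_{R\ge1}R^{-\lambda}\llbracket f\rrbracket_{\beta,R}$, $\|f\|_{\beta,\lambda}=\llbracket f\rrbracket_{\beta,\lambda}+\|f(0)\|$. A field $A:[0,T]\times V\to V$ with $A(0,\cdot)=0$, $A_{s,t}(x)=A(t,x)-A(s,x)$ is in $C^\alpha_tC^{\beta,\lambda}_V$ if $\sup_{s<t}\|A_{s,t}\|_{\beta,\lambda}/|t-s|^\alpha<\infty$. $C^\alpha_tV$: $\alpha$-Hölder paths $[0,T]\to V$. Integral: $\int_s^tA(\mathrm{d} r,x_r)=\lim_{|\Pi|\to0}\sum_iA_{t_i,t_{i+1}}(x_{t_i})$. A flow of homeomorphisms is $\Phi:\Delta_2\times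 V\to V$, $\Phi_{s\to t}(x)=\Phi(s,t,x)$, with $\Phi(t,t,x)=x$; $\Phi(s,\cdot,x)\in C^\alpha([s,T];V)$; $\Phi(s,t,x)=x+\int_s^tA(\mathrm{d} r,\Phi(s,r,x))$; $\Phi(u,t,\Phi(s,u,x))=\Phi(s,t,x)$ for $s\le u\le t$; and each $\Phi_{s\to t}$ a homeomorphism of $V$ with inverse $\Phi_{s\leftarrow t}$. It is spatially locally $\gamma$-Hölder continuous if for all $(s,t)\in\Delta_2$, $\Phi_{s\to t}$ and $\Phi_{s\leftarrow t}$ are $\gamma$-Hölder continuous on every bounded subset of $V$. *)

theory Defs
  imports "HOL-Analysis.Analysis"
begin

definition incr :: "(real \<Rightarrow> 'a::real_normed_vector \<Rightarrow> 'a) \<Rightarrow> real \<Rightarrow> real \<Rightarrow> 'a \<Rightarrow> 'a" where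
  "incr A s t x = A t x - A s x"

text \<open>A in C^alpha_t C^{beta,lambda}_V on [0,T]: A(0,.) = 0 and
  sup_{s<t} ( [A_{s,t}]_{beta,lambda} + |A_{s,t}(0)| ) / |t-s|^alpha < infinity,
  written out as the existence of a finite bound.\<close>
definition field_holder :: "real \<Rightarrow> real \<Rightarrow> real \<Rightarrow> real \<Rightarrow> (real \<Rightarrow> 'a::real_normed_vector \<Rightarrow> 'a) \<Rightarrow> bool" where
  "field_holder T \<alpha> \<beta> lam A \<longleftrightarrow>
     (\<forall>x. A 0 x = 0) \<and>
     (\<exists>C. \<forall>s t. 0 \<le> s \<and> s < t \<and> t \<le> T \<longrightarrow>
        norm (incr A s t 0) \<le> C * \<bar>t - s\<bar> powr \<alpha> \<and>
        (\<forall>R\<ge>1. \<forall>x y. x \<noteq> y \<and> norm x \<le> R \<and> norm y \<le> R \<longrightarrow>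
           norm (incr A s t x - incr A s t y) \<le> C * \<bar>t - s\<bar> powr \<alpha> * R powr lam * norm (x - y) powr \<beta>))"

definition holder_path :: "real \<Rightarrow> real \<Rightarrow> real \<Rightarrow> (real \<Rightarrow> 'a::real_normed_vector) \<Rightarrow> bool" where
  "holder_path \<alpha> a b x \<longleftrightarrow>
     (\<exists>C. \<forall>s\<in>{a..b}. \<forall>t\<in>{a..b}. norm (x t - x s) \<le> C * \<bar>t - s\<bar> powr \<alpha>)"

definition is_partition :: "real \<Rightarrow> real \<Rightarrow> real list \<Rightarrow> bool" where
  "is_partition s t P \<longleftrightarrow> length P \<ge> 2 \<and> hd P = s \<and> last P = t \<and> sorted P"

definition mesh :: "real list \<Rightarrow> real" where
  "mesh P = Max (insert 0 {P ! Suc i - P ! i | i. Suc i < length P})"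

definition riemann_sum :: "(real \<Rightarrow> 'a::real_normed_vector \<Rightarrow> 'a) \<Rightarrow> (real \<Rightarrow> 'a) \<Rightarrow> real list \<Rightarrow> 'a" where
  "riemann_sum A x P = (\<Sum>i<length P - 1. incr A (P ! i) (P ! Suc i) (x (P ! i)))"

definition has_young_integral :: "(real \<Rightarrow> 'a::real_normed_vector \<Rightarrow> 'a) \<Rightarrow> (real \<Rightarrow> 'a) \<Rightarrow> real \<Rightarrow> real \<Rightarrow> 'a \<Rightarrow> bool" where
  "has_young_integral A x s t I \<longleftrightarrow>
     (\<forall>\<epsilon>>0. \<exists>\<delta>>0. \<forall>P. is_partition s t P \<and> mesh P < \<delta> \<longrightarrow> norm (riemann_sum A x P - I) < \<epsilon>)"

definition yde_solution :: "real \<Rightarrow> (real \<Rightarrow> 'a::real_normed_vector \<Rightarrow> 'a) \<Rightarrow> 'a \<Rightarrow> (real \<Rightarrow> 'a) \<Rightarrow> bool" where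
  "yde_solution T A x0 x \<longleftrightarrow> x 0 = x0 \<and>
     (\<forall>t\<in>{0..T}. has_young_integral A x 0 t (x t - x0))"

definition is_flow :: "real \<Rightarrow> real \<Rightarrow> (real \<Rightarrow> 'a::real_normed_vector \<Rightarrow> 'a) \<Rightarrow>
    (real \<Rightarrow> real \<Rightarrow> 'a \<Rightarrow> 'a) \<Rightarrow> (real \<Rightarrow> real \<Rightarrow> 'a \<Rightarrow> 'a) \<Rightarrow> bool" where
  "is_flow T \<alpha> A \<Phi> \<Psi> \<longleftrightarrow>
     (\<forall>t\<in>{0..T}. \<forall>x. \<Phi> t t x = x) \<and>
     (\<forall>s\<in>{0..T}. \<forall>x. holder_path \<alpha> s T (\<lambda>t. \<Phi> s t x)) \<and>
     (\<forall>s\<in>{0..T}. \<forall>t\<in>{s..T}. \<forall>x. has_young_integral A (\<lambda>r. \<Phi> s r x) s t (\<Phi> s t x - x)) \<and>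
     (\<forall>s u t x. 0 \<le> s \<and> s \<le> u \<and> u \<le> t \<and> t \<le> T \<longrightarrow> \<Phi> u t (\<Phi> s u x) = \<Phi> s t x) \<and>
     (\<forall>s\<in>{0..T}. \<forall>t\<in>{s..T}. homeomorphism UNIV UNIV (\<Phi> s t) (\<Psi> s t))"

definition holder_on :: "real \<Rightarrow> 'a::real_normed_vector set \<Rightarrow> ('a \<Rightarrow> 'b::real_normed_vector) \<Rightarrow> bool" where
  "holder_on \<gamma> S f \<longleftrightarrow> (\<exists>C. \<forall>x\<in>S. \<forall>y\<in>S. norm (f x - f y) \<le> C * norm (x - y) powr \<gamma>)"

definition flow_locally_holder :: "real \<Rightarrow> real \<Rightarrow> (real \<Rightarrow> real \<Rightarrow> 'a::real_normed_vector \<Rightarrow> 'a) \<Rightarrow>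
    (real \<Rightarrow> real \<Rightarrow> 'a \<Rightarrow> 'a) \<Rightarrow> bool" where
  "flow_locally_holder T \<gamma> \<Phi> \<Psi> \<longleftrightarrow>
     (\<forall>s\<in>{0..T}. \<forall>t\<in>{s..T}. \<forall>B. bounded B \<longrightarrow> holder_on \<gamma> B (\<Phi> s t) \<and> holder_on \<gamma> B (\<Psi> s t))"

end

theory Submission
  imports Defs
begin

text \<open>Existence is provided by the flow itself: \<open>t \<mapsto> \<Phi>\<^sub>0\<^sub>\<rightarrow>\<^sub>t(x\<^sub>0)\<close>.
  For uniqueness let \<open>y\<close> be any \<open>\<alpha>\<close>-Hoelder solution and put \<open>g(r) = \<Phi>\<^sub>r\<^sub>\<rightarrow>\<^sub>t(y\<^sub>r)\<close>.
  The sewing lemma shows that every \<open>\<alpha>\<close>-Hoelder solution, in particular \<open>y\<close> and every flow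
  trajectory, follows the Euler germ \<open>A\<^sub>s\<^sub>,\<^sub>u(x\<^sub>s)\<close> up to \<open>O(|u - s|\<^sup>\<theta>)\<close> with
  \<open>\<theta> = \<alpha>(1 + \<beta>) > 1\<close>; for the flow this holds with constants linear in the size of the
  starting point, by an a priori bound on the Hoelder constant. Hence \<open>y\<^sub>s\<close> and the point
  that \<open>\<Phi>\<close> carries from \<open>(r, y\<^sub>r)\<close> to time \<open>s\<close> differ by \<open>O(|r - s|\<^sup>\<theta>)\<close>, and
  \<open>\<gamma>\<close>-Hoelder continuity of \<open>\<Phi>\<^sub>s\<^sub>\<rightarrow>\<^sub>t\<close> gives \<open>|g(r) - g(s)| = O(|r - s|\<^sup>\<theta>\<^sup>\<gamma>)\<close>.
  Since \<open>\<theta>\<gamma> > 1\<close>, \<open>g\<close> is constant and \<open>y\<^sub>t = g(t) = g(0) = \<Phi>\<^sub>0\<^sub>\<rightarrow>\<^sub>t(x\<^sub>0)\<close>.\<close>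

section \<open>Partitions and Riemann sums\<close>

definition consecutive_pairs :: "'b list \<Rightarrow> ('b \<times> 'b) list" where
  "consecutive_pairs P = zip P (tl P)"

lemma consecutive_pairs_Cons_Cons [simp]:
  "consecutive_pairs (a # b # r) = (a, b) # consecutive_pairs (b # r)"
  by (simp add: consecutive_pairs_def)

lemma consecutive_pairs_singleton [simp]: "consecutive_pairs [a] = []"
  by (simp add: consecutive_pairs_def)

lemma consecutive_pairs_append:
  "xs \<noteq> [] \<Longrightarrow> ys \<noteq> [] \<Longrightarrow>
    consecutive_pairs (xs @ ys) = consecutive_pairs xs @ (last xs, hd ys) # consecutive_pairs ys"
proof (induction xs rule: induct_list012)
  case (2 a)
  then show ?case by (cases ys) (auto simp: consecutive_pairs_def)
qed simp_all

lemma in_set_consecutive_pairs: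
  "(p, q) \<in> set (consecutive_pairs P) \<longleftrightarrow> (\<exists>i. Suc i < length P \<and> p = P ! i \<and> q = P ! Suc i)"
  unfolding consecutive_pairs_def set_zip by (force simp: nth_tl)

lemma riemann_sum_eq_sum_list:
  "riemann_sum A x P = (\<Sum>(p, q)\<leftarrow>consecutive_pairs P. incr A p q (x p))"
  unfolding riemann_sum_def sum_list_sum_nth
  by (rule sum.cong) (auto simp: consecutive_pairs_def nth_tl)

lemma mesh_less_iff:
  assumes "\<delta> > 0"
  shows "mesh P < \<delta> \<longleftrightarrow> (\<forall>(p, q)\<in>set (consecutive_pairs P). q - p < \<delta>)"
proof -
  have "{P ! Suc i - P ! i |i. Suc i < length P} = (\<lambda>i. P ! Suc i - P ! i) ` {i. Suc i < length P}"
    by blast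
  moreover have "finite {i. Suc i < length P}"
    by (rule finite_subset[of _ "{..<length P}"]) auto
  ultimately have "finite {P ! Suc i - P ! i |i. Suc i < length P}" by simp
  then have "mesh P < \<delta> \<longleftrightarrow> (\<forall>i. Suc i < length P \<longrightarrow> P ! Suc i - P ! i < \<delta>)"
    using assms unfolding mesh_def by fastforce
  also have "\<dots> \<longleftrightarrow> (\<forall>(p, q)\<in>set (consecutive_pairs P). q - p < \<delta>)"
  proof
    assume "\<forall>(p, q)\<in>set (consecutive_pairs P). q - p < \<delta>"
    moreover have "(P ! i, P ! Suc i) \<in> set (consecutive_pairs P)" if "Suc i < length P" for i
      using that by (auto simp: in_set_consecutive_pairs)
    ultimately show "\<forall>i. Suc i < length P \<longrightarrow> P ! Suc i - P ! i < \<delta>" by fastforce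
  qed (auto simp: in_set_consecutive_pairs)
  finally show ?thesis .
qed

lemma is_partition_subset:
  assumes "is_partition s u P"
  shows "set P \<subseteq> {s..u}"
proof
  fix p assume "p \<in> set P"
  then obtain i where i: "i < length P" "p = P ! i" by (auto simp: in_set_conv_nth)
  have "P ! 0 \<le> P ! i" "P ! i \<le> P ! (length P - 1)"
    using assms i by (auto simp: is_partition_def sorted_iff_nth_mono)
  moreover have "P \<noteq> []" using i by auto
  ultimately show "p \<in> {s..u}"
    using assms i by (auto simp: is_partition_def hd_conv_nth last_conv_nth)
qed

lemma partition_split:
  assumes "is_partition a s P" "is_partition s u Q"
  obtains c r where "Q = s # c # r" "P \<noteq> []" "last P = s"
proof -
  have "P \<noteq> []" "last P = s" using assms(1) by (auto simp: is_partition_def)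
  moreover obtain c r where "Q = s # c # r"
    using assms(2) by (cases Q; cases "tl Q") (auto simp: is_partition_def)
  ultimately show ?thesis using that by simp
qed

lemma is_partition_append:
  assumes "is_partition a s P" "is_partition s u Q"
  shows "is_partition a u (P @ tl Q)"
proof -
  obtain c r where Q: "Q = s # c # r" and "P \<noteq> []" using partition_split[OF assms] by metis
  have "\<forall>p\<in>set P. \<forall>q\<in>set (c # r). p \<le> q"
    using is_partition_subset[OF assms(1)] is_partition_subset[OF assms(2)] Q by fastforce
  then show ?thesis
    using assms Q \<open>P \<noteq> []\<close> by (auto simp: is_partition_def sorted_append)
qed

lemma riemann_sum_append:
  assumes "is_partition a s P" "is_partition s u Q"
  shows "riemann_sum A x (P @ tl Q) = riemann_sum A x P + riemann_sum A x Q"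
proof -
  obtain c r where "Q = s # c # r" "P \<noteq> []" "last P = s" using partition_split[OF assms] by metis
  then show ?thesis by (simp add: riemann_sum_eq_sum_list consecutive_pairs_append)
qed

lemma mesh_append_less:
  assumes "is_partition a s P" "is_partition s u Q" "mesh P < \<delta>" "mesh Q < \<delta>" "\<delta> > 0"
  shows "mesh (P @ tl Q) < \<delta>"
proof -
  obtain c r where "Q = s # c # r" "P \<noteq> []" "last P = s" using partition_split[OF assms(1,2)] by metis
  then show ?thesis using assms by (auto simp: mesh_less_iff consecutive_pairs_append)
qed

lemma exists_fine_partition:
  assumes "s \<le> u" "\<delta> > 0"
  obtains P where "is_partition s u P" "mesh P < \<delta>"
proof -
  obtain N :: nat where N: "(u - s) / \<delta> < N" using reals_Archimedean2 by blast
  moreover have "0 \<le> (u - s) / \<delta>" using assms by simp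
  ultimately have "N > 0" by linarith
  define P where "P = map (\<lambda>i. s + (u - s) * real i / real N) [0..<Suc N]"
  have "sorted P"
    unfolding P_def sorted_map
    using assms by (intro sorted_wrt_mono_rel[OF _ sorted_upt])
      (auto simp: divide_right_mono mult_left_mono)
  then have "is_partition s u P"
    using \<open>N > 0\<close> by (simp add: is_partition_def P_def hd_map last_map del: upt_Suc)
  moreover have "mesh P < \<delta>"
    unfolding mesh_less_iff[OF assms(2)]
  proof clarify
    fix p q assume "(p, q) \<in> set (consecutive_pairs P)"
    then obtain i where "i < N" "p = s + (u - s) * real i / real N"
        "q = s + (u - s) * real (Suc i) / real N"
      by (auto simp: in_set_consecutive_pairs P_def simp del: upt_Suc)
    then have "q - p = (u - s) / real N" by (simp add: field_simps)
    also have "\<dots> < \<delta>" using N \<open>N > 0\<close> assms by (simp add: field_simps)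
    finally show "q - p < \<delta>" .
  qed
  ultimately show ?thesis using that by blast
qed

section \<open>The sewing lemma\<close>

lemma sorted_split_between:
  assumes "sorted P" "2 \<le> length P" "hd P \<le> c" "c \<le> last P"
  shows "\<exists>xs ys. P = xs @ ys \<and> xs \<noteq> [] \<and> ys \<noteq> [] \<and> last xs \<le> c \<and> c \<le> hd ys"
  using assms
proof (induction P rule: induct_list012)
  case (3 a b r)
  show ?case
  proof (cases "c \<le> b")
    case True
    then show ?thesis using "3.prems" by (intro exI[of _ "[a]"] exI[of _ "b # r"]) auto
  next
    case False
    then have "b \<le> c" by simp
    have "r \<noteq> []" using "3.prems"(4) False by auto
    then obtain xs ys where "b # r = xs @ ys" "xs \<noteq> []" "ys \<noteq> []" "last xs \<le> c" "c \<le> hd ys"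
      using "3.IH"(2) "3.prems" \<open>b \<le> c\<close> by (auto simp: Suc_le_eq)
    then show ?thesis by (intro exI[of _ "a # xs"] exI[of _ ys]) auto
  qed
qed auto

lemma norm_add_diff_diff_le:
  fixes x y z w :: "'a::real_normed_vector"
  shows "norm (x + y - z - w) \<le> norm x + norm y + norm z + norm w"
  using norm_triangle_ineq4[of "x + y - z" w] norm_triangle_ineq4[of "x + y" z] norm_triangle_ineq[of x y]
  by linarith

lemma sorted_hd_le_last: "sorted P \<Longrightarrow> P \<noteq> [] \<Longrightarrow> hd P \<le> last P"
  by (simp add: hd_conv_nth last_conv_nth sorted_iff_nth_mono)

definition sewing_const :: "real \<Rightarrow> real" where
  "sewing_const \<theta> = 2 / (1 - 2 powr (1 - \<theta>))"

lemma sewing_const_pos: "\<theta> > 1 \<Longrightarrow> sewing_const \<theta> > 0"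
  by (simp add: sewing_const_def powr_less_one)

lemma sewing_const_fixpoint: "\<theta> > 1 \<Longrightarrow> sewing_const \<theta> * 2 powr (1 - \<theta>) + 2 = sewing_const \<theta>"
proof -
  assume "\<theta> > 1"
  then have "1 - 2 powr (1 - \<theta>) \<noteq> (0::real)" by (simp add: powr_less_one)
  then show ?thesis
    unfolding sewing_const_def by (simp add: divide_simps)
qed

text \<open>Splitting the partition at the midpoint of its range halves both parts, and the
  induction closes because \<open>K 2\<^sup>1\<^sup>-\<^sup>\<theta> + 2 L = K\<close> for \<open>K = sewing_const \<theta> * L\<close>.\<close>
lemma sewing_bound:
  fixes f :: "real \<Rightarrow> real \<Rightarrow> 'a::real_normed_vector"
  assumes \<theta>: "\<theta> > 1" and L: "L \<ge> 0" and diag: "\<And>p. f p p = 0"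
    and defect: "\<And>a m b. s \<le> a \<Longrightarrow> a \<le> m \<Longrightarrow> m \<le> b \<Longrightarrow> b \<le> u \<Longrightarrow>
      norm (f a b - f a m - f m b) \<le> L * (b - a) powr \<theta>"
  shows "P \<noteq> [] \<Longrightarrow> sorted P \<Longrightarrow> set P \<subseteq> {s..u} \<Longrightarrow>
    norm ((\<Sum>(p, q)\<leftarrow>consecutive_pairs P. f p q) - f (hd P) (last P))
      \<le> sewing_const \<theta> * L * (last P - hd P) powr \<theta>"
proof (induction "length P" arbitrary: P rule: less_induct)
  case less
  let ?S = "\<lambda>Q. \<Sum>(p, q)\<leftarrow>consecutive_pairs Q. f p q"
  let ?K = "sewing_const \<theta> * L"
  show ?case
  proof (cases "length P = 1")
    case True
    then obtain p where "P = [p]" by (auto simp: length_Suc_conv)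
    then show ?thesis by (simp add: diag)
  next
    case False
    define a0 b0 where "a0 = hd P" and "b0 = last P"
    have "2 \<le> length P" using False less.prems(1) by (cases P) (auto simp: Suc_le_eq)
    moreover have "a0 \<le> b0" using less.prems by (simp add: a0_def b0_def sorted_hd_le_last)
    then have "hd P \<le> (a0 + b0) / 2" "(a0 + b0) / 2 \<le> last P" by (simp_all add: a0_def b0_def)
    ultimately obtain xs ys where P: "P = xs @ ys" "xs \<noteq> []" "ys \<noteq> []"
      and mid: "last xs \<le> (a0 + b0) / 2" "(a0 + b0) / 2 \<le> hd ys"
      using sorted_split_between[OF less.prems(2)] by blast
    define a b where "a = last xs" and "b = hd ys"
    have sorted: "sorted xs" "sorted ys" "\<forall>p\<in>set xs. \<forall>q\<in>set ys. p \<le> q"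
      using less.prems(2) P by (simp_all add: sorted_append)
    have ends: "hd xs = a0" "last ys = b0" using P by (simp_all add: a0_def b0_def)
    have order: "a0 \<le> a" "a \<le> b" "b \<le> b0"
      using sorted ends P(2,3) by (auto simp: a_def b_def sorted_hd_le_last)
    have range: "s \<le> a0" "b0 \<le> u"
      using less.prems P unfolding a0_def b0_def by (auto simp: subset_iff)
    have IHx: "norm (?S xs - f a0 a) \<le> ?K * (a - a0) powr \<theta>"
      using less.hyps[of xs] P sorted less.prems(3) ends by (auto simp: a_def)
    have IHy: "norm (?S ys - f b b0) \<le> ?K * (b0 - b) powr \<theta>"
      using less.hyps[of ys] P sorted less.prems(3) ends by (auto simp: b_def)
    have "?S P - f a0 b0 = (?S xs - f a0 a) + (?S ys - f b b0)
        - (f a0 b0 - f a0 a - f a b0) - (f a b0 - f a b - f b b0)"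
      using P by (simp add: consecutive_pairs_append a_def b_def algebra_simps)
    then have "norm (?S P - f a0 b0) \<le> norm (?S xs - f a0 a) + norm (?S ys - f b b0)
        + norm (f a0 b0 - f a0 a - f a b0) + norm (f a b0 - f a b - f b b0)"
      by (simp only: norm_add_diff_diff_le)
    also have "\<dots> \<le> ?K * (a - a0) powr \<theta> + ?K * (b0 - b) powr \<theta>
        + L * (b0 - a0) powr \<theta> + L * (b0 - a) powr \<theta>"
      using IHx IHy defect[of a0 a b0] defect[of a b b0] order range by simp
    also have "\<dots> \<le> 2 * ?K * ((b0 - a0) / 2) powr \<theta> + 2 * L * (b0 - a0) powr \<theta>"
    proof -
      have K: "?K \<ge> 0" using sewing_const_pos[OF \<theta>] L by simp
      have "(a - a0) powr \<theta> \<le> ((b0 - a0) / 2) powr \<theta>" "(b0 - b) powr \<theta> \<le> ((b0 - a0) / 2) powr \<theta>"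
          "(b0 - a) powr \<theta> \<le> (b0 - a0) powr \<theta>"
        using order mid \<theta> by (auto intro!: powr_mono2 simp: a_def b_def)
      from mult_left_mono[OF this(1) K] mult_left_mono[OF this(2) K] mult_left_mono[OF this(3) L]
      show ?thesis by linarith
    qed
    also have "\<dots> = (sewing_const \<theta> * 2 powr (1 - \<theta>) + 2) * L * (b0 - a0) powr \<theta>"
      using \<open>a0 \<le> b0\<close> by (simp add: powr_divide powr_diff field_simps)
    also have "\<dots> = ?K * (b0 - a0) powr \<theta>" using sewing_const_fixpoint[OF \<theta>] by simp
    finally show ?thesis by (simp add: a0_def b0_def)
  qed
qed

lemma has_young_integral_diff_bound:
  assumes I: "has_young_integral A x a s I" and J: "has_young_integral A x a u J"
    and "a \<le> s" "s \<le> u"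
    and sums: "\<And>Q. is_partition s u Q \<Longrightarrow> norm (riemann_sum A x Q - v) \<le> B"
  shows "norm (J - I - v) \<le> B"
proof (rule field_le_epsilon)
  fix e :: real assume "e > 0"
  then have "e / 2 > 0" by simp
  obtain d1 where "d1 > 0"
    and d1: "\<forall>P. is_partition a s P \<and> mesh P < d1 \<longrightarrow> norm (riemann_sum A x P - I) < e / 2"
    using I[unfolded has_young_integral_def, rule_format, OF \<open>e / 2 > 0\<close>] by blast
  obtain d2 where "d2 > 0"
    and d2: "\<forall>P. is_partition a u P \<and> mesh P < d2 \<longrightarrow> norm (riemann_sum A x P - J) < e / 2"
    using J[unfolded has_young_integral_def, rule_format, OF \<open>e / 2 > 0\<close>] by blast
  define d where "d = min d1 d2"
  have "d > 0" using \<open>d1 > 0\<close> \<open>d2 > 0\<close> by (simp add: d_def)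
  obtain P where P: "is_partition a s P" "mesh P < d"
    using exists_fine_partition[OF \<open>a \<le> s\<close> \<open>d > 0\<close>] .
  obtain Q where Q: "is_partition s u Q" "mesh Q < d"
    using exists_fine_partition[OF \<open>s \<le> u\<close> \<open>d > 0\<close>] .
  let ?X = "riemann_sum A x P - I"
  let ?Y = "riemann_sum A x P + riemann_sum A x Q - J"
  let ?Z = "riemann_sum A x Q - v"
  have "norm ?X < e / 2" using d1 P by (simp add: d_def)
  moreover have "norm ?Y < e / 2"
    using d2[rule_format, of "P @ tl Q"] is_partition_append[OF P(1) Q(1)]
      mesh_append_less[OF P(1) Q(1) P(2) Q(2) \<open>d > 0\<close>]
    unfolding riemann_sum_append[OF P(1) Q(1)] d_def by simp
  moreover have "J - I - v = ?X - ?Y + ?Z" by (simp add: algebra_simps)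
  then have "norm (J - I - v) \<le> norm ?X + norm ?Y + norm ?Z"
    unfolding \<open>J - I - v = ?X - ?Y + ?Z\<close>
    using norm_triangle_ineq[of "?X - ?Y" ?Z] norm_triangle_ineq4[of ?X ?Y] by linarith
  ultimately show "norm (J - I - v) \<le> B + e" using sums[OF Q(1)] by linarith
qed

lemma bound_of_le_add_powr:
  fixes d a b \<beta> :: real
  assumes "0 \<le> d" "0 \<le> a" "0 \<le> b" "0 < \<beta>" "\<beta> < 1" "d \<le> a + b * d powr \<beta>"
  shows "d \<le> max (2 * a) ((2 * b) powr (1 / (1 - \<beta>)))"
proof (cases "d \<le> 2 * a")
  case False
  then have "d > 0" "d < 2 * b * d powr \<beta>" using assms by auto
  then have "d powr (1 - \<beta>) < 2 * b" by (simp add: powr_diff divide_less_eq mult.commute)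
  then have "(d powr (1 - \<beta>)) powr (1 / (1 - \<beta>)) < (2 * b) powr (1 / (1 - \<beta>))"
    using assms by (intro powr_less_mono2) auto
  then show ?thesis using assms \<open>d > 0\<close> by (simp add: powr_powr)
qed simp

lemma exists_least_linear_bound:
  fixes g c :: "'i \<Rightarrow> real"
  assumes "\<forall>i\<in>I. 0 \<le> c i" "l \<le> k" "\<forall>i\<in>I. g i \<le> k * c i"
  obtains K where "l \<le> K" "\<forall>i\<in>I. g i \<le> K * c i"
    and "\<And>K'. l \<le> K' \<Longrightarrow> \<forall>i\<in>I. g i \<le> K' * c i \<Longrightarrow> K \<le> K'"
proof -
  define S where "S = {K. l \<le> K \<and> (\<forall>i\<in>I. g i \<le> K * c i)}"
  have "S \<noteq> {}" using assms by (auto simp: S_def)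
  then have "l \<le> Inf S" by (intro cInf_greatest) (auto simp: S_def)
  moreover have "g i \<le> Inf S * c i" if "i \<in> I" for i
  proof (cases "c i = 0")
    case True
    then show ?thesis using assms that by auto
  next
    case False
    then have "c i > 0" using assms that by force
    have "g i / c i \<le> Inf S"
      using \<open>S \<noteq> {}\<close> that \<open>c i > 0\<close> by (intro cInf_greatest) (auto simp: S_def divide_le_eq)
    then show ?thesis using \<open>c i > 0\<close> by (simp add: divide_le_eq)
  qed
  moreover have "Inf S \<le> K'" if "l \<le> K'" "\<forall>i\<in>I. g i \<le> K' * c i" for K'
    using that by (intro cInf_lower) (auto simp: S_def bdd_below_def)
  ultimately show ?thesis using that by blast
qed

lemma le_scaled_of_le_add_powr:
  fixes \<delta> q c1 c2 \<alpha> \<beta> \<theta> :: real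
  assumes "0 \<le> \<delta>" "0 \<le> q" "q \<le> 1" "0 \<le> c1" "0 \<le> c2" "0 < \<beta>" "\<beta> < 1" "\<theta> \<le> \<alpha> / (1 - \<beta>)"
    and "\<delta> \<le> c1 * q powr \<theta> + (c2 * q powr \<alpha>) * \<delta> powr \<beta>"
  shows "\<delta> \<le> (2 * c1 + (2 * c2) powr (1 / (1 - \<beta>))) * q powr \<theta>"
proof -
  define X Y where "X = 2 * (c1 * q powr \<theta>)" and "Y = (2 * c2) powr (1 / (1 - \<beta>)) * q powr \<theta>"
  have "(2 * (c2 * q powr \<alpha>)) powr (1 / (1 - \<beta>)) = (2 * c2) powr (1 / (1 - \<beta>)) * q powr (\<alpha> / (1 - \<beta>))"
    using assms by (simp add: powr_mult powr_powr mult.assoc)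
  also have "\<dots> \<le> Y"
    unfolding Y_def using assms by (intro mult_left_mono powr_mono') auto
  finally have "max X ((2 * (c2 * q powr \<alpha>)) powr (1 / (1 - \<beta>))) \<le> max X Y" by (simp add: max_def)
  moreover have "\<delta> \<le> max X ((2 * (c2 * q powr \<alpha>)) powr (1 / (1 - \<beta>)))"
    unfolding X_def using assms by (intro bound_of_le_add_powr) auto
  moreover have "max X Y \<le> X + Y" using assms by (simp add: X_def Y_def)
  ultimately have "\<delta> \<le> X + Y" by linarith
  then show ?thesis by (simp add: X_def Y_def algebra_simps)
qed

lemma has_derivative_zero_if_hoelder_gt_1:
  fixes g :: "real \<Rightarrow> 'a::real_normed_vector"
  assumes "1 < p" "0 \<le> H" "0 < \<delta>"
    and bound: "\<forall>r\<in>S. \<bar>r - s\<bar> \<le> \<delta> \<longrightarrow> norm (g r - g s) \<le> H * \<bar>r - s\<bar> powr p"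
  shows "(g has_derivative (\<lambda>_. 0)) (at s within S)"
  unfolding has_derivative_within_alt
proof (intro conjI allI impI)
  fix e :: real assume "e > 0"
  define d where "d = min \<delta> ((e / (H + 1)) powr (1 / (p - 1)))"
  have "d > 0" using assms \<open>e > 0\<close> by (simp add: d_def)
  have "norm (g r - g s) \<le> e * norm (r - s)" if "r \<in> S" "norm (r - s) < d" for r
  proof -
    define q where "q = \<bar>r - s\<bar>"
    have "q < (e / (H + 1)) powr (1 / (p - 1))" "q \<le> \<delta>" "0 \<le> q"
      using that by (auto simp: q_def d_def)
    then have "q powr (p - 1) \<le> ((e / (H + 1)) powr (1 / (p - 1))) powr (p - 1)"
      using assms by (intro powr_mono2) auto
    also have "\<dots> = e / (H + 1)" using assms \<open>e > 0\<close> by (simp add: powr_powr)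
    finally have "H * q powr (p - 1) \<le> H * (e / (H + 1))" using assms by (intro mult_left_mono)
    also have "\<dots> \<le> e" using assms \<open>e > 0\<close> by (simp add: field_simps)
    finally have "H * q powr (p - 1) \<le> e" .
    have "norm (g r - g s) \<le> H * q powr p" using bound that \<open>q \<le> \<delta>\<close> by (simp add: q_def)
    also have "\<dots> = H * q powr (p - 1) * q"
      using \<open>0 \<le> q\<close> assms by (cases "q = 0") (simp_all add: powr_diff)
    also have "\<dots> \<le> e * q" using \<open>H * q powr (p - 1) \<le> e\<close> \<open>0 \<le> q\<close> by (rule mult_right_mono)
    finally show ?thesis by (simp add: q_def)
  qed
  then show "\<exists>d>0. \<forall>r\<in>S. norm (r - s) < d \<longrightarrow> norm (g r - g s - 0) \<le> e * norm (r - s)"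
    using \<open>d > 0\<close> by auto
qed simp

lemma eq_if_locally_hoelder_gt_1:
  fixes g :: "real \<Rightarrow> 'a::real_normed_vector"
  assumes "a \<le> b" "1 < p"
    and local: "\<And>s. s \<in> {a..b} \<Longrightarrow>
      \<exists>H\<ge>0. \<exists>\<delta>>0. \<forall>r\<in>{a..b}. \<bar>r - s\<bar> \<le> \<delta> \<longrightarrow> norm (g r - g s) \<le> H * \<bar>r - s\<bar> powr p"
  shows "g b = g a"
proof -
  have "(g has_derivative (\<lambda>_. 0)) (at s within {a..b})" if "s \<in> {a..b}" for s
    using local[OF that] has_derivative_zero_if_hoelder_gt_1[OF \<open>1 < p\<close>] by blast
  then obtain c where "\<forall>s\<in>{a..b}. g s = c"
    using has_derivative_zero_constant[of "{a..b}" g] by auto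
  then show ?thesis using \<open>a \<le> b\<close> by auto
qed

section \<open>A priori bounds for solutions\<close>

lemma incr_self [simp]: "incr A s s x = 0"
  by (simp add: incr_def)

locale young_field =
  fixes T \<alpha> \<beta> lam C :: real
    and A :: "real \<Rightarrow> 'a::real_normed_vector \<Rightarrow> 'a"
  assumes \<alpha>_pos: "0 < \<alpha>" and \<beta>_pos: "0 < \<beta>" and \<beta>_less_1: "\<beta> < 1"
    and lam_pos: "0 < lam" and \<beta>_lam: "\<beta> + lam \<le> 1" and young_exponent: "1 < \<alpha> * (1 + \<beta>)"
    and C_nonneg: "0 \<le> C"
    and incr_0_bound: "\<And>s t. 0 \<le> s \<Longrightarrow> s \<le> t \<Longrightarrow> t \<le> T \<Longrightarrow>
      norm (incr A s t 0) \<le> C * (t - s) powr \<alpha>"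
    and incr_hoelder: "\<And>s t R x y. 0 \<le> s \<Longrightarrow> s \<le> t \<Longrightarrow> t \<le> T \<Longrightarrow> 1 \<le> R \<Longrightarrow>
      norm x \<le> R \<Longrightarrow> norm y \<le> R \<Longrightarrow>
      norm (incr A s t x - incr A s t y) \<le> C * (t - s) powr \<alpha> * R powr lam * norm (x - y) powr \<beta>"
begin

abbreviation \<theta> :: real where "\<theta> \<equiv> \<alpha> * (1 + \<beta>)"

lemma norm_incr_le:
  assumes "0 \<le> s" "s \<le> t" "t \<le> T" "1 \<le> R" "norm x \<le> R"
  shows "norm (incr A s t x) \<le> 2 * C * (t - s) powr \<alpha> * R"
proof -
  have "R powr lam * norm x powr \<beta> \<le> R powr lam * R powr \<beta>"
    using assms \<beta>_pos by (intro mult_left_mono powr_mono2) auto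
  also have "\<dots> = R powr (\<beta> + lam)" by (simp add: powr_add)
  also have "\<dots> \<le> R powr 1" using assms \<beta>_lam by (intro powr_mono) auto
  finally have "C * (t - s) powr \<alpha> * (R powr lam * norm x powr \<beta>) \<le> C * (t - s) powr \<alpha> * R"
    using assms C_nonneg by (intro mult_left_mono) auto
  moreover have "norm (incr A s t x - incr A s t 0) \<le> C * (t - s) powr \<alpha> * R powr lam * norm x powr \<beta>"
    using incr_hoelder[of s t R x 0] assms by simp
  moreover have "C * (t - s) powr \<alpha> \<le> C * (t - s) powr \<alpha> * R"
    using assms C_nonneg mult_left_mono[of 1 R "C * (t - s) powr \<alpha>"] by simp
  ultimately show ?thesis
    using incr_0_bound[of s t] assms norm_triangle_ineq2[of "incr A s t x" "incr A s t 0"]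
    by (simp add: mult.assoc)
qed

lemma germ_defect_bound:
  assumes "0 \<le> a" "a \<le> m" "m \<le> b" "b \<le> T" "1 \<le> R" "norm x \<le> R" "norm y \<le> R"
    and "0 \<le> K" "norm (x - y) \<le> K * (m - a) powr \<alpha>"
  shows "norm (incr A a b x - incr A a m x - incr A m b y) \<le> C * R powr lam * K powr \<beta> * (b - a) powr \<theta>"
proof -
  have "incr A a b x - incr A a m x - incr A m b y = incr A m b x - incr A m b y"
    by (simp add: incr_def)
  then have "norm (incr A a b x - incr A a m x - incr A m b y)
      \<le> C * (b - m) powr \<alpha> * R powr lam * norm (x - y) powr \<beta>"
    using incr_hoelder[of m b R x y] assms by simp
  also have "\<dots> \<le> C * (b - m) powr \<alpha> * R powr lam * (K * (m - a) powr \<alpha>) powr \<beta>"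
    using assms C_nonneg \<beta>_pos by (intro mult_left_mono powr_mono2) auto
  also have "\<dots> = C * R powr lam * K powr \<beta> * ((b - m) powr \<alpha> * (m - a) powr (\<alpha> * \<beta>))"
    using assms by (simp add: powr_mult powr_powr)
  also have "\<dots> \<le> C * R powr lam * K powr \<beta> * ((b - a) powr \<alpha> * (b - a) powr (\<alpha> * \<beta>))"
    using assms \<alpha>_pos \<beta>_pos C_nonneg by (intro mult_left_mono mult_mono powr_mono2) auto
  also have "\<dots> = C * R powr lam * K powr \<beta> * (b - a) powr \<theta>"
    by (simp add: powr_add[symmetric] algebra_simps)
  finally show ?thesis .
qed

lemma young_remainder_bound:
  fixes z :: "real \<Rightarrow> 'a"
  assumes "0 \<le> a" "a \<le> s" "s \<le> u" "u \<le> b" "b \<le> T"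
    and "\<forall>t\<in>{a..b}. has_young_integral A z a t (z t - z a)"
    and R: "1 \<le> R" "\<forall>r\<in>{a..b}. norm (z r) \<le> R"
    and K: "0 \<le> K" "\<forall>r\<in>{a..b}. \<forall>r'\<in>{a..b}. norm (z r - z r') \<le> K * \<bar>r - r'\<bar> powr \<alpha>"
  shows "norm (z u - z s - incr A s u (z s))
    \<le> sewing_const \<theta> * C * R powr lam * K powr \<beta> * (u - s) powr \<theta>"
proof -
  let ?L = "C * R powr lam * K powr \<beta>"
  have "norm (riemann_sum A z Q - incr A s u (z s)) \<le> sewing_const \<theta> * ?L * (u - s) powr \<theta>"
    if Q: "is_partition s u Q" for Q
  proof -
    have "norm ((\<Sum>(p, q)\<leftarrow>consecutive_pairs Q. incr A p q (z p)) - incr A (hd Q) (last Q) (z (hd Q)))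
        \<le> sewing_const \<theta> * ?L * (last Q - hd Q) powr \<theta>"
    proof (rule sewing_bound[where s = s and u = u])
      fix a' m b' assume "s \<le> a'" "a' \<le> m" "m \<le> b'" "b' \<le> u"
      then show "norm (incr A a' b' (z a') - incr A a' m (z a') - incr A m b' (z m))
          \<le> ?L * (b' - a') powr \<theta>"
        using assms germ_defect_bound[of a' m b' R "z a'" "z m" K] K(2)[rule_format, of a' m] by auto
    qed (use young_exponent C_nonneg R Q is_partition_subset[OF Q] in \<open>auto simp: is_partition_def\<close>)
    then show ?thesis using Q by (simp add: riemann_sum_eq_sum_list is_partition_def)
  qed
  then have "norm ((z u - z a) - (z s - z a) - incr A s u (z s)) \<le> sewing_const \<theta> * ?L * (u - s) powr \<theta>"
    using assms by (intro has_young_integral_diff_bound[of A z a s _ u]) auto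
  then show ?thesis by (simp add: mult.assoc)
qed

lemma young_exponent_le: "\<theta> \<le> \<alpha> / (1 - \<beta>)"
proof -
  have "\<alpha> * ((1 + \<beta>) * (1 - \<beta>)) \<le> \<alpha> * 1"
    using \<alpha>_pos by (intro mult_left_mono) (auto simp: algebra_simps)
  then show ?thesis using \<beta>_less_1 by (simp add: field_simps)
qed

lemma solution_hoelder_improve:
  fixes z :: "real \<Rightarrow> 'a"
  assumes "0 \<le> a" "b \<le> T"
    and "\<forall>t\<in>{a..b}. has_young_integral A z a t (z t - z a)"
    and R: "1 \<le> R" "\<forall>r\<in>{a..b}. norm (z r) \<le> R"
    and K: "0 \<le> K" "\<forall>r\<in>{a..b}. \<forall>r'\<in>{a..b}. norm (z r - z r') \<le> K * \<bar>r - r'\<bar> powr \<alpha>"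
    and "r \<in> {a..b}" "r' \<in> {a..b}"
  shows "norm (z r - z r')
    \<le> (2 * C * R + sewing_const \<theta> * C * T powr (\<theta> - \<alpha>) * R powr lam * K powr \<beta>) * \<bar>r - r'\<bar> powr \<alpha>"
proof -
  let ?L = "sewing_const \<theta> * C * R powr lam * K powr \<beta>"
  have L: "0 \<le> ?L" using sewing_const_pos[OF young_exponent] C_nonneg by simp
  have ordered: "norm (z v - z u) \<le> (2 * C * R + ?L * T powr (\<theta> - \<alpha>)) * (v - u) powr \<alpha>"
    if "a \<le> u" "u \<le> v" "v \<le> b" for u v
  proof -
    have "(v - u) powr \<theta> = (v - u) powr \<alpha> * (v - u) powr (\<theta> - \<alpha>)"
      by (simp add: powr_add[symmetric])
    also have "\<dots> \<le> (v - u) powr \<alpha> * T powr (\<theta> - \<alpha>)"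
      using assms that \<beta>_pos \<alpha>_pos by (intro mult_left_mono powr_mono2) auto
    finally have "norm (z v - z u - incr A u v (z u)) \<le> ?L * (v - u) powr \<alpha> * T powr (\<theta> - \<alpha>)"
      using young_remainder_bound[of a u v b z R K] assms that mult_left_mono[OF _ L]
      by (fastforce simp: mult.assoc)
    moreover have "norm (incr A u v (z u)) \<le> 2 * C * (v - u) powr \<alpha> * R"
      using norm_incr_le[of u v R "z u"] assms that by auto
    ultimately show ?thesis
      using norm_triangle_ineq[of "incr A u v (z u)" "z v - z u - incr A u v (z u)"]
      by (simp add: algebra_simps)
  qed
  show ?thesis
  proof (cases "r \<le> r'")
    case True
    then show ?thesis using ordered[of r r'] assms
      by (simp add: norm_minus_commute[of "z r"] abs_minus_commute[of r] ac_simps)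
  qed (use ordered[of r' r] assms in \<open>simp add: ac_simps\<close>)
qed

text \<open>The optimal Hoelder constant \<open>K\<close> and sup bound \<open>R\<close> on \<open>[s, b]\<close> (infima of
  all admissible constants) satisfy \<open>K \<le> 2 C R + c R\<^sup>\<lambda> K\<^sup>\<beta>\<close> by
  \<open>solution_hoelder_improve\<close>; as \<open>\<beta> < 1\<close> and \<open>\<beta> + \<lambda> \<le> 1\<close> this forces \<open>K \<le> M\<^sub>0 R\<close>,
  and on a short interval then \<open>R \<le> \<parallel>z\<^sub>s\<parallel> + R / 2\<close>.\<close>
lemma short_time_solution_bounds:
  fixes z :: "real \<Rightarrow> 'a"
  assumes M0: "4 * C \<le> M0" "(2 * sewing_const \<theta> * C * T powr (\<theta> - \<alpha>)) powr (1 / (1 - \<beta>)) \<le> M0"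
    and "0 \<le> s" "s \<le> b" "b \<le> T" and short: "M0 * (b - s) powr \<alpha> \<le> 1 / 2"
    and hoelder: "\<forall>r\<in>{s..b}. \<forall>r'\<in>{s..b}. norm (z r - z r') \<le> K0 * \<bar>r - r'\<bar> powr \<alpha>"
    and "\<forall>t\<in>{s..b}. has_young_integral A z s t (z t - z s)"
  obtains K R where "0 \<le> K" "K \<le> 2 * M0 * max 1 (norm (z s))"
    and "1 \<le> R" "R \<le> 2 * max 1 (norm (z s))"
    and "\<forall>r\<in>{s..b}. norm (z r) \<le> R"
    and "\<forall>r\<in>{s..b}. \<forall>r'\<in>{s..b}. norm (z r - z r') \<le> K * \<bar>r - r'\<bar> powr \<alpha>"
proof -
  let ?hoelder = "\<lambda>K. \<forall>i\<in>{s..b} \<times> {s..b}. norm (z (fst i) - z (snd i)) \<le> K * \<bar>fst i - snd i\<bar> powr \<alpha>"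
  have "?hoelder \<bar>K0\<bar>"
  proof
    fix i assume "i \<in> {s..b} \<times> {s..b}"
    then have "norm (z (fst i) - z (snd i)) \<le> K0 * \<bar>fst i - snd i\<bar> powr \<alpha>"
      using hoelder by (auto simp: mem_Times_iff)
    also have "\<dots> \<le> \<bar>K0\<bar> * \<bar>fst i - snd i\<bar> powr \<alpha>" by (intro mult_right_mono) auto
    finally show "norm (z (fst i) - z (snd i)) \<le> \<bar>K0\<bar> * \<bar>fst i - snd i\<bar> powr \<alpha>" .
  qed
  then obtain K where "0 \<le> K" "?hoelder K" and K_least: "\<And>K'. 0 \<le> K' \<Longrightarrow> ?hoelder K' \<Longrightarrow> K \<le> K'"
    by (rule exists_least_linear_bound[where I = "{s..b} \<times> {s..b}" and l = 0 and k = "\<bar>K0\<bar>"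
      and g = "\<lambda>i. norm (z (fst i) - z (snd i))" and c = "\<lambda>i. \<bar>fst i - snd i\<bar> powr \<alpha>",
      rotated 2]) auto
  have K: "\<forall>r\<in>{s..b}. \<forall>r'\<in>{s..b}. norm (z r - z r') \<le> K * \<bar>r - r'\<bar> powr \<alpha>"
  proof (intro ballI)
    fix r r' assume "r \<in> {s..b}" "r' \<in> {s..b}"
    then show "norm (z r - z r') \<le> K * \<bar>r - r'\<bar> powr \<alpha>"
      using bspec[OF \<open>?hoelder K\<close>, of "(r, r')"] by simp
  qed
  have K_short: "norm (z r - z s) \<le> K * (b - s) powr \<alpha>" if "r \<in> {s..b}" for r
  proof -
    have "norm (z r - z s) \<le> K * \<bar>r - s\<bar> powr \<alpha>" using K that \<open>s \<le> b\<close> by force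
    also have "\<dots> \<le> K * (b - s) powr \<alpha>"
      using that \<alpha>_pos \<open>0 \<le> K\<close> by (intro mult_left_mono powr_mono2) auto
    finally show ?thesis .
  qed
  have "\<forall>r\<in>{s..b}. norm (z r) \<le> max 1 (norm (z s) + K * (b - s) powr \<alpha>) * 1"
  proof
    fix r assume "r \<in> {s..b}"
    then have "norm (z r) \<le> norm (z s) + K * (b - s) powr \<alpha>"
      using K_short[of r] norm_triangle_ineq2[of "z r" "z s"] by linarith
    then show "norm (z r) \<le> max 1 (norm (z s) + K * (b - s) powr \<alpha>) * 1" by simp
  qed
  then obtain R where R: "1 \<le> R" "\<forall>r\<in>{s..b}. norm (z r) \<le> R * 1"
    and R_least: "\<And>R'. 1 \<le> R' \<Longrightarrow> \<forall>r\<in>{s..b}. norm (z r) \<le> R' * 1 \<Longrightarrow> R \<le> R'"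
    by (rule exists_least_linear_bound[where I = "{s..b}" and l = 1 and g = "\<lambda>r. norm (z r)"
      and c = "\<lambda>_. 1" and k = "max 1 (norm (z s) + K * (b - s) powr \<alpha>)", rotated 2]) auto
  have "0 \<le> M0" using M0 C_nonneg by linarith
  define KS where "KS = sewing_const \<theta>"
  have KS: "0 < KS" using sewing_const_pos[OF young_exponent] by (simp add: KS_def)
  have "K \<le> 2 * C * R + KS * C * T powr (\<theta> - \<alpha>) * R powr lam * K powr \<beta>"
  proof (rule K_least)
    show "0 \<le> 2 * C * R + KS * C * T powr (\<theta> - \<alpha>) * R powr lam * K powr \<beta>"
      using C_nonneg KS R by simp
    show "?hoelder (2 * C * R + KS * C * T powr (\<theta> - \<alpha>) * R powr lam * K powr \<beta>)"
      using solution_hoelder_improve[of s b z R K] assms R \<open>0 \<le> K\<close> K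
      by (simp add: KS_def mem_Times_iff)
  qed
  then have "K \<le> max (2 * (2 * C * R)) ((2 * (KS * C * T powr (\<theta> - \<alpha>) * R powr lam)) powr (1 / (1 - \<beta>)))"
    using \<open>0 \<le> K\<close> R C_nonneg KS \<beta>_pos \<beta>_less_1 by (intro bound_of_le_add_powr) (auto simp: mult.assoc)
  also have "\<dots> \<le> M0 * R"
  proof -
    have "(2 * (KS * C * T powr (\<theta> - \<alpha>) * R powr lam)) powr (1 / (1 - \<beta>))
        = (2 * KS * C * T powr (\<theta> - \<alpha>)) powr (1 / (1 - \<beta>)) * R powr (lam / (1 - \<beta>))"
      using KS C_nonneg by (simp add: powr_mult powr_powr mult.assoc)
    also have "\<dots> \<le> M0 * R powr 1"
      using M0 R \<beta>_lam \<beta>_less_1 \<open>0 \<le> M0\<close> by (intro mult_mono powr_mono) (auto simp: KS_def)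
    finally show ?thesis using M0 R by (simp add: mult_right_mono)
  qed
  finally have KR: "K \<le> M0 * R" .
  have "norm (z r - z s) \<le> R / 2" if "r \<in> {s..b}" for r
  proof -
    have "norm (z r - z s) \<le> (M0 * (b - s) powr \<alpha>) * R"
      using K_short[OF that] mult_right_mono[OF KR, of "(b - s) powr \<alpha>"] by (simp add: ac_simps)
    also have "\<dots> \<le> R / 2" using short R by (simp add: mult_right_mono)
    finally show ?thesis .
  qed
  then have "norm (z r) \<le> max 1 (norm (z s) + R / 2) * 1" if "r \<in> {s..b}" for r
    using that norm_triangle_ineq2[of "z r" "z s"] by fastforce
  then have "R \<le> max 1 (norm (z s) + R / 2)" using R_least by simp
  then have "R \<le> 2 * max 1 (norm (z s))" by linarith
  then have "K \<le> 2 * M0 * max 1 (norm (z s))"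
    using KR mult_left_mono[of R "2 * max 1 (norm (z s))" M0] \<open>0 \<le> M0\<close> by simp
  with \<open>0 \<le> K\<close> K R \<open>R \<le> 2 * max 1 (norm (z s))\<close> show ?thesis using that by simp
qed

lemma short_time_solution_estimates:
  fixes z :: "real \<Rightarrow> 'a"
  assumes M0: "4 * C \<le> M0" "(2 * sewing_const \<theta> * C * T powr (\<theta> - \<alpha>)) powr (1 / (1 - \<beta>)) \<le> M0"
    and "0 \<le> s" "s \<le> b" "b \<le> T" and "M0 * (b - s) powr \<alpha> \<le> 1 / 2"
    and "\<forall>r\<in>{s..b}. \<forall>r'\<in>{s..b}. norm (z r - z r') \<le> K0 * \<bar>r - r'\<bar> powr \<alpha>"
    and "\<forall>t\<in>{s..b}. has_young_integral A z s t (z t - z s)"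
  shows "norm (z b - z s) \<le> 2 * M0 * max 1 (norm (z s)) * (b - s) powr \<alpha>"
    and "norm (z b - z s - incr A s b (z s))
      \<le> sewing_const \<theta> * C * 2 powr lam * (2 * M0) powr \<beta> * max 1 (norm (z s)) * (b - s) powr \<theta>"
proof -
  define m where "m = max 1 (norm (z s))"
  obtain K R where K: "0 \<le> K" "K \<le> 2 * M0 * m"
    and R: "1 \<le> R" "R \<le> 2 * m" "\<forall>r\<in>{s..b}. norm (z r) \<le> R"
    and hoelder_K: "\<forall>r\<in>{s..b}. \<forall>r'\<in>{s..b}. norm (z r - z r') \<le> K * \<bar>r - r'\<bar> powr \<alpha>"
    using short_time_solution_bounds[OF assms] unfolding m_def by metis
  have "norm (z b - z s) \<le> K * (b - s) powr \<alpha>"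
    using hoelder_K \<open>s \<le> b\<close> by force
  also have "\<dots> \<le> 2 * M0 * m * (b - s) powr \<alpha>" using K by (intro mult_right_mono) auto
  finally show "norm (z b - z s) \<le> 2 * M0 * m * (b - s) powr \<alpha>" .
  have "m \<ge> 1" "0 \<le> M0" using M0 C_nonneg by (auto simp: m_def)
  have "norm (z b - z s - incr A s b (z s)) \<le> sewing_const \<theta> * C * R powr lam * K powr \<beta> * (b - s) powr \<theta>"
    using young_remainder_bound[of s s b b z R K] assms R K hoelder_K by auto
  also have "\<dots> \<le> sewing_const \<theta> * C * (2 * m) powr lam * (2 * M0 * m) powr \<beta> * (b - s) powr \<theta>"
    using R K C_nonneg sewing_const_pos[OF young_exponent] lam_pos \<beta>_pos
    by (intro mult_right_mono mult_mono powr_mono2 mult_nonneg_nonneg) auto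
  also have "\<dots> = sewing_const \<theta> * C * 2 powr lam * (2 * M0) powr \<beta> * m powr (\<beta> + lam) * (b - s) powr \<theta>"
    using \<open>m \<ge> 1\<close> \<open>0 \<le> M0\<close> by (simp add: powr_mult powr_add ac_simps)
  also have "\<dots> \<le> sewing_const \<theta> * C * 2 powr lam * (2 * M0) powr \<beta> * m * (b - s) powr \<theta>"
    using \<open>m \<ge> 1\<close> \<beta>_lam C_nonneg sewing_const_pos[OF young_exponent]
      powr_mono[of "\<beta> + lam" 1 m]
    by (intro mult_right_mono mult_left_mono) auto
  finally show "norm (z b - z s - incr A s b (z s))
      \<le> sewing_const \<theta> * C * 2 powr lam * (2 * M0) powr \<beta> * m * (b - s) powr \<theta>" .
qed

lemma hoelder_solution_euler_bound:
  fixes y :: "real \<Rightarrow> 'a"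
  assumes "0 \<le> T" "holder_path \<alpha> 0 T y" "yde_solution T A x0 y"
  obtains R E where "1 \<le> R" "\<forall>r\<in>{0..T}. norm (y r) \<le> R" "0 \<le> E"
    and "\<And>s u. 0 \<le> s \<Longrightarrow> s \<le> u \<Longrightarrow> u \<le> T \<Longrightarrow>
      norm (y u - y s - incr A s u (y s)) \<le> E * (u - s) powr \<theta>"
proof -
  obtain Ky where Ky: "\<forall>r\<in>{0..T}. \<forall>r'\<in>{0..T}. norm (y r' - y r) \<le> Ky * \<bar>r' - r\<bar> powr \<alpha>"
    using assms(2) unfolding holder_path_def by blast
  define K where "K = \<bar>Ky\<bar>"
  have "0 \<le> K" by (simp add: K_def)
  have K: "\<forall>r\<in>{0..T}. \<forall>r'\<in>{0..T}. norm (y r - y r') \<le> K * \<bar>r - r'\<bar> powr \<alpha>"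
  proof (intro ballI)
    fix r r' assume "r \<in> {0..T}" "r' \<in> {0..T}"
    then have "norm (y r - y r') \<le> Ky * \<bar>r - r'\<bar> powr \<alpha>" using Ky by blast
    also have "\<dots> \<le> K * \<bar>r - r'\<bar> powr \<alpha>" by (intro mult_right_mono) (auto simp: K_def)
    finally show "norm (y r - y r') \<le> K * \<bar>r - r'\<bar> powr \<alpha>" .
  qed
  have "y 0 = x0" and sol: "\<forall>u\<in>{0..T}. has_young_integral A y 0 u (y u - y 0)"
    using assms(3) unfolding yde_solution_def by auto
  define R where "R = max 1 (norm x0 + K * T powr \<alpha>)"
  have R: "1 \<le> R" "\<forall>r\<in>{0..T}. norm (y r) \<le> R"
  proof -
    have "norm (y r) \<le> norm x0 + K * T powr \<alpha>" if "r \<in> {0..T}" for r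
    proof -
      have "0 \<in> {0..T}" using assms(1) by simp
      then have "norm (y r - y 0) \<le> K * \<bar>r - 0\<bar> powr \<alpha>" using K that by blast
      also have "\<dots> \<le> K * T powr \<alpha>"
        using that \<alpha>_pos \<open>0 \<le> K\<close> by (intro mult_left_mono powr_mono2) auto
      finally show ?thesis using norm_triangle_sub[of "y r" "y 0"] \<open>y 0 = x0\<close> by simp
    qed
    then show "1 \<le> R" "\<forall>r\<in>{0..T}. norm (y r) \<le> R" by (auto simp: R_def le_max_iff_disj)
  qed
  define E where "E = sewing_const \<theta> * C * R powr lam * K powr \<beta>"
  have "0 \<le> E" using sewing_const_pos[OF young_exponent] C_nonneg by (simp add: E_def)
  moreover have "norm (y u - y s - incr A s u (y s)) \<le> E * (u - s) powr \<theta>"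
    if "0 \<le> s" "s \<le> u" "u \<le> T" for s u
    using young_remainder_bound[of 0 s u T y R K] that sol R K \<open>0 \<le> K\<close> by (simp add: E_def)
  ultimately show ?thesis using that R by blast
qed

end

section \<open>Flows and uniqueness\<close>

locale young_flow = young_field +
  fixes \<Phi> \<Psi> :: "real \<Rightarrow> real \<Rightarrow> 'a::real_normed_vector \<Rightarrow> 'a"
  assumes flow: "is_flow T \<alpha> A \<Phi> \<Psi>"
begin

lemma flow_start: "t \<in> {0..T} \<Longrightarrow> \<Phi> t t x = x"
  using flow by (simp add: is_flow_def)

lemma flow_hoelder: "s \<in> {0..T} \<Longrightarrow> holder_path \<alpha> s T (\<lambda>t. \<Phi> s t x)"
  using flow by (simp add: is_flow_def)

lemma flow_solves: "s \<in> {0..T} \<Longrightarrow> t \<in> {s..T} \<Longrightarrow> has_young_integral A (\<lambda>r. \<Phi> s r x) s t (\<Phi> s t x - x)"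
  using flow by (simp add: is_flow_def)

lemma flow_comp: "0 \<le> s \<Longrightarrow> s \<le> u \<Longrightarrow> u \<le> t \<Longrightarrow> t \<le> T \<Longrightarrow> \<Phi> u t (\<Phi> s u x) = \<Phi> s t x"
  using flow by (simp add: is_flow_def)

lemma flow_inverse: "0 \<le> s \<Longrightarrow> s \<le> t \<Longrightarrow> t \<le> T \<Longrightarrow> \<Phi> s t (\<Psi> s t x) = x"
  using flow by (auto simp: is_flow_def homeomorphism_def)

lemma flow_short_time_estimates:
  assumes M0: "4 * C \<le> M0" "(2 * sewing_const \<theta> * C * T powr (\<theta> - \<alpha>)) powr (1 / (1 - \<beta>)) \<le> M0"
    and "0 \<le> s" "s \<le> u" "u \<le> T" and short: "M0 * (u - s) powr \<alpha> \<le> 1 / 2"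
  shows "norm (\<Phi> s u x - x) \<le> 2 * M0 * max 1 (norm x) * (u - s) powr \<alpha>"
    and "norm (\<Phi> s u x - x - incr A s u x)
      \<le> sewing_const \<theta> * C * 2 powr lam * (2 * M0) powr \<beta> * max 1 (norm x) * (u - s) powr \<theta>"
proof -
  have "s \<in> {0..T}" using assms by auto
  obtain K0 where K0: "\<forall>r\<in>{s..T}. \<forall>r'\<in>{s..T}. norm (\<Phi> s r' x - \<Phi> s r x) \<le> K0 * \<bar>r' - r\<bar> powr \<alpha>"
    using flow_hoelder[OF \<open>s \<in> {0..T}\<close>, of x] unfolding holder_path_def by blast
  have hoelder: "\<forall>r\<in>{s..u}. \<forall>r'\<in>{s..u}. norm (\<Phi> s r x - \<Phi> s r' x) \<le> K0 * \<bar>r - r'\<bar> powr \<alpha>"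
  proof (intro ballI)
    fix r r' assume "r \<in> {s..u}" "r' \<in> {s..u}"
    then show "norm (\<Phi> s r x - \<Phi> s r' x) \<le> K0 * \<bar>r - r'\<bar> powr \<alpha>"
      using K0 \<open>u \<le> T\<close> by simp
  qed
  have sol: "\<forall>t\<in>{s..u}. has_young_integral A (\<lambda>r. \<Phi> s r x) s t (\<Phi> s t x - \<Phi> s s x)"
    using flow_solves[OF \<open>s \<in> {0..T}\<close>, of _ x] flow_start[OF \<open>s \<in> {0..T}\<close>, of x] assms by simp
  show "norm (\<Phi> s u x - x) \<le> 2 * M0 * max 1 (norm x) * (u - s) powr \<alpha>"
    and "norm (\<Phi> s u x - x - incr A s u x)
      \<le> sewing_const \<theta> * C * 2 powr lam * (2 * M0) powr \<beta> * max 1 (norm x) * (u - s) powr \<theta>"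
    using short_time_solution_estimates[OF M0 assms(3,4,5) short hoelder sol]
      flow_start[OF \<open>s \<in> {0..T}\<close>, of x] by simp_all
qed

end

locale young_flow_bounds = young_flow +
  fixes h M :: real
  assumes h_pos: "0 < h" and h_le_1: "h \<le> 1" and M_nonneg: "0 \<le> M"
    and step_small: "M * h powr \<alpha> \<le> 1 / 2"
    and flow_increment: "\<And>s u x. 0 \<le> s \<Longrightarrow> s \<le> u \<Longrightarrow> u \<le> T \<Longrightarrow> u - s \<le> h \<Longrightarrow>
      norm (\<Phi> s u x - x) \<le> M * max 1 (norm x) * (u - s) powr \<alpha>"
    and flow_remainder: "\<And>s u x. 0 \<le> s \<Longrightarrow> s \<le> u \<Longrightarrow> u \<le> T \<Longrightarrow> u - s \<le> h \<Longrightarrow>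
      norm (\<Phi> s u x - x - incr A s u x) \<le> M * max 1 (norm x) * (u - s) powr (\<alpha> * (1 + \<beta>))"

lemma (in young_flow) exists_flow_bounds: "\<exists>h M. young_flow_bounds T \<alpha> \<beta> lam C A \<Phi> \<Psi> h M"
proof -
  define M0 where "M0 = max (4 * C) ((2 * sewing_const \<theta> * C * T powr (\<theta> - \<alpha>)) powr (1 / (1 - \<beta>)))"
  define M where "M = max (2 * M0) (sewing_const \<theta> * C * 2 powr lam * (2 * M0) powr \<beta>)"
  define h where "h = min 1 ((1 / (2 * (M + 1))) powr (1 / \<alpha>))"
  have M0: "4 * C \<le> M0" "(2 * sewing_const \<theta> * C * T powr (\<theta> - \<alpha>)) powr (1 / (1 - \<beta>)) \<le> M0"
    and M: "2 * M0 \<le> M" "sewing_const \<theta> * C * 2 powr lam * (2 * M0) powr \<beta> \<le> M"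
    by (simp_all add: M0_def M_def)
  have "0 \<le> M0" "0 \<le> M" using C_nonneg M0 M by linarith+
  have "0 < h" "h \<le> 1" using \<open>0 \<le> M\<close> by (auto simp: h_def)
  have "M * h powr \<alpha> \<le> M * ((1 / (2 * (M + 1))) powr (1 / \<alpha>)) powr \<alpha>"
    using \<open>0 \<le> M\<close> \<open>0 < h\<close> \<alpha>_pos by (intro mult_left_mono powr_mono2) (auto simp: h_def)
  also have "\<dots> \<le> 1 / 2" using \<open>0 \<le> M\<close> \<alpha>_pos by (simp add: powr_powr field_simps)
  finally have step_small: "M * h powr \<alpha> \<le> 1 / 2" .
  have "norm (\<Phi> s u x - x) \<le> M * max 1 (norm x) * (u - s) powr \<alpha> \<and>
      norm (\<Phi> s u x - x - incr A s u x) \<le> M * max 1 (norm x) * (u - s) powr \<theta>"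
    if "0 \<le> s" "s \<le> u" "u \<le> T" "u - s \<le> h" for s u x
  proof -
    have "M0 * (u - s) powr \<alpha> \<le> M * h powr \<alpha>"
      using that M \<open>0 \<le> M0\<close> \<alpha>_pos by (intro mult_mono powr_mono2) auto
    then have "M0 * (u - s) powr \<alpha> \<le> 1 / 2" using step_small by linarith
    then show ?thesis
      using flow_short_time_estimates[OF M0 that(1,2,3), of x]
        mult_right_mono[OF M(1), of "max 1 (norm x) * (u - s) powr \<alpha>"]
        mult_right_mono[OF M(2), of "max 1 (norm x) * (u - s) powr \<theta>"]
      by (simp add: mult.assoc)
  qed
  then show ?thesis
    using young_flow_axioms \<open>0 < h\<close> \<open>h \<le> 1\<close> \<open>0 \<le> M\<close> step_small
    by (intro exI[of _ h] exI[of _ M]) (simp add: young_flow_bounds_def young_flow_bounds_axioms_def)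
qed

context young_flow_bounds
begin

lemma step_small_le: "0 \<le> q \<Longrightarrow> q \<le> h \<Longrightarrow> M * q powr \<alpha> \<le> 1 / 2"
  using step_small M_nonneg \<alpha>_pos mult_left_mono[OF powr_mono2[of \<alpha> q h] M_nonneg] by linarith

lemma flow_step_close:
  assumes "0 \<le> r" "r \<le> s" "s \<le> T" "s - r \<le> h" "1 \<le> R" "norm x \<le> R"
    and euler: "norm (w - x - incr A r s x) \<le> E * (s - r) powr \<theta>"
  shows "norm (\<Phi> r s x - w) \<le> (M * R + E) * (s - r) powr \<theta>"
    and "norm (\<Phi> r s x) \<le> 2 * R + 1"
proof -
  have m: "max 1 (norm x) \<le> R" using assms by simp
  have "norm (\<Phi> r s x - x - incr A r s x) \<le> M * max 1 (norm x) * (s - r) powr \<theta>"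
    using flow_remainder[of r s x] assms by simp
  also have "\<dots> \<le> M * R * (s - r) powr \<theta>"
    using m M_nonneg by (intro mult_right_mono mult_left_mono) auto
  finally have "norm (\<Phi> r s x - x - incr A r s x) \<le> M * R * (s - r) powr \<theta>" .
  then show "norm (\<Phi> r s x - w) \<le> (M * R + E) * (s - r) powr \<theta>"
    using euler norm_triangle_ineq4[of "\<Phi> r s x - x - incr A r s x" "w - x - incr A r s x"]
    by (simp add: algebra_simps)
  have "norm (\<Phi> r s x - x) \<le> M * max 1 (norm x) * (s - r) powr \<alpha>"
    using flow_increment[of r s x] assms by simp
  also have "\<dots> \<le> M * R * (s - r) powr \<alpha>"
    using m M_nonneg by (intro mult_right_mono mult_left_mono) auto
  also have "\<dots> = (M * (s - r) powr \<alpha>) * R" by simp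
  also have "\<dots> \<le> R / 2" using step_small_le[of "s - r"] assms by (simp add: mult_right_mono)
  finally show "norm (\<Phi> r s x) \<le> 2 * R + 1"
    using assms norm_triangle_ineq2[of "\<Phi> r s x" x] by linarith
qed

text \<open>\<open>\<delta> = \<parallel>v - x\<parallel>\<close> satisfies \<open>\<delta> \<le> c\<^sub>1 q\<^sup>\<theta> + c\<^sub>2 q\<^sup>\<alpha> \<delta>\<^sup>\<beta>\<close> with \<open>q = r - s\<close>,
  the \<open>\<delta>\<^sup>\<beta>\<close> term coming from the spatial regularity of \<open>A\<close>.\<close>
lemma flow_preimage_close:
  assumes "0 \<le> s" "s \<le> r" "r \<le> T" "r - s \<le> h" "1 \<le> R" "norm x \<le> R" "norm (\<Phi> s r v) \<le> R"
    and "0 \<le> E" and euler: "norm (\<Phi> s r v - x - incr A s r x) \<le> E * (r - s) powr \<theta>"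
  shows "norm v \<le> 2 * R + 1"
    and "norm (v - x) \<le> (2 * (E + M * (2 * R + 1)) + (2 * (C * (2 * R + 1) powr lam)) powr (1 / (1 - \<beta>)))
      * (r - s) powr \<theta>"
proof -
  define q where "q = r - s"
  have q: "0 \<le> q" "q \<le> 1" using assms h_le_1 by (auto simp: q_def)
  have "norm (\<Phi> s r v - v) \<le> (M * q powr \<alpha>) * max 1 (norm v)"
    using flow_increment[of s r v] assms by (simp add: q_def ac_simps)
  also have "\<dots> \<le> (1 / 2) * max 1 (norm v)"
    using step_small_le[of q] assms q by (intro mult_right_mono) (auto simp: q_def)
  finally have "norm v \<le> R + max 1 (norm v) / 2"
    using assms norm_triangle_sub[of v "\<Phi> s r v"] norm_minus_commute[of v "\<Phi> s r v"] by linarith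
  then show v: "norm v \<le> 2 * R + 1" using \<open>1 \<le> R\<close> by (cases "norm v \<le> 1") auto
  let ?X = "\<Phi> s r v - x - incr A s r x"
  let ?Y = "incr A s r v - incr A s r x"
  let ?Z = "\<Phi> s r v - v - incr A s r v"
  have "norm (v - x) = norm (?X - ?Y - ?Z)" by (rule arg_cong[where f = norm]) simp
  then have "norm (v - x) \<le> norm ?X + norm ?Y + norm ?Z"
    using norm_triangle_ineq4[of "?X - ?Y" ?Z] norm_triangle_ineq4[of ?X ?Y] by linarith
  moreover have "norm ?Y \<le> (C * (2 * R + 1) powr lam * q powr \<alpha>) * norm (v - x) powr \<beta>"
    using incr_hoelder[of s r "2 * R + 1" v x] assms v by (simp add: q_def ac_simps)
  moreover have "norm ?Z \<le> M * (2 * R + 1) * q powr \<theta>"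
    using flow_remainder[of s r v] assms v M_nonneg
      mult_right_mono[OF mult_left_mono[of "max 1 (norm v)" "2 * R + 1" M], of "q powr \<theta>"]
    by (simp add: q_def)
  ultimately have "norm (v - x) \<le> (E + M * (2 * R + 1)) * q powr \<theta>
      + (C * (2 * R + 1) powr lam * q powr \<alpha>) * norm (v - x) powr \<beta>"
    using euler by (simp add: q_def algebra_simps)
  then show "norm (v - x) \<le> (2 * (E + M * (2 * R + 1)) + (2 * (C * (2 * R + 1) powr lam)) powr (1 / (1 - \<beta>)))
      * (r - s) powr \<theta>"
    unfolding q_def[symmetric] using q assms M_nonneg C_nonneg \<beta>_pos \<beta>_less_1 young_exponent_le
    by (intro le_scaled_of_le_add_powr) auto
qed

lemma solution_shadowed_by_flow:
  fixes y :: "real \<Rightarrow> 'a"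
  assumes R: "1 \<le> R" "\<forall>r\<in>{0..T}. norm (y r) \<le> R" and "0 \<le> E"
    and euler: "\<And>s u. 0 \<le> s \<Longrightarrow> s \<le> u \<Longrightarrow> u \<le> T \<Longrightarrow>
      norm (y u - y s - incr A s u (y s)) \<le> E * (u - s) powr \<theta>"
    and "s \<in> {0..t}" "t \<le> T"
  obtains D where "0 \<le> D" and "\<And>r. r \<in> {0..t} \<Longrightarrow> \<bar>r - s\<bar> \<le> h \<Longrightarrow>
    \<exists>p. norm p \<le> 2 * R + 1 \<and> norm (p - y s) \<le> D * \<bar>r - s\<bar> powr \<theta> \<and> \<Phi> r t (y r) = \<Phi> s t p"
proof -
  define D where "D = (M * R + E)
    + (2 * (E + M * (2 * R + 1)) + (2 * (C * (2 * R + 1) powr lam)) powr (1 / (1 - \<beta>)))"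
  have D_ge: "M * R + E \<le> D"
      "2 * (E + M * (2 * R + 1)) + (2 * (C * (2 * R + 1) powr lam)) powr (1 / (1 - \<beta>)) \<le> D"
    using R \<open>0 \<le> E\<close> M_nonneg by (auto simp: D_def)
  have "\<exists>p. norm p \<le> 2 * R + 1 \<and> norm (p - y s) \<le> D * \<bar>r - s\<bar> powr \<theta> \<and> \<Phi> r t (y r) = \<Phi> s t p"
    if r: "r \<in> {0..t}" "\<bar>r - s\<bar> \<le> h" for r
  proof (cases "r \<le> s")
    case True
    have "norm (\<Phi> r s (y r) - y s) \<le> (M * R + E) * (s - r) powr \<theta>" "norm (\<Phi> r s (y r)) \<le> 2 * R + 1"
      using flow_step_close[of r s R "y r" "y s" E] euler[of r s] R True r assms by auto
    moreover have "\<Phi> r t (y r) = \<Phi> s t (\<Phi> r s (y r))"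
      using flow_comp[of r s t "y r"] True r assms by auto
    moreover have "(M * R + E) * (s - r) powr \<theta> \<le> D * \<bar>r - s\<bar> powr \<theta>"
      using D_ge True by (simp add: mult_right_mono)
    ultimately show ?thesis by (intro exI[of _ "\<Phi> r s (y r)"]) auto
  next
    case False
    define p where "p = \<Psi> s r (y r)"
    have "\<Phi> s r p = y r" using flow_inverse[of s r "y r"] False r assms by (simp add: p_def)
    then have "norm p \<le> 2 * R + 1"
        "norm (p - y s) \<le> (2 * (E + M * (2 * R + 1)) + (2 * (C * (2 * R + 1) powr lam)) powr (1 / (1 - \<beta>)))
          * (r - s) powr \<theta>"
      using flow_preimage_close[of s r R "y s" p E] euler[of s r] R False r assms by auto
    moreover have "\<Phi> r t (y r) = \<Phi> s t p"
      using flow_comp[of s r t p] \<open>\<Phi> s r p = y r\<close> False r assms by auto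
    moreover have "(2 * (E + M * (2 * R + 1)) + (2 * (C * (2 * R + 1) powr lam)) powr (1 / (1 - \<beta>)))
        * (r - s) powr \<theta> \<le> D * \<bar>r - s\<bar> powr \<theta>"
      using D_ge False by (simp add: mult_right_mono)
    ultimately show ?thesis by auto
  qed
  moreover have "0 \<le> D"
    unfolding D_def using R M_nonneg \<open>0 \<le> E\<close> by (intro add_nonneg_nonneg mult_nonneg_nonneg) auto
  ultimately show ?thesis using that by blast
qed

lemma solution_eq_flow:
  assumes \<gamma>: "0 < \<gamma>" "1 < \<alpha> * \<gamma> * (1 + \<beta>)" and flow_holder: "flow_locally_holder T \<gamma> \<Phi> \<Psi>"
    and y: "holder_path \<alpha> 0 T y" "yde_solution T A x0 y" and t: "t \<in> {0..T}"
  shows "y t = \<Phi> 0 t x0"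
proof -
  obtain R E where R: "1 \<le> R" "\<forall>r\<in>{0..T}. norm (y r) \<le> R" and "0 \<le> E"
    and euler: "\<And>s u. 0 \<le> s \<Longrightarrow> s \<le> u \<Longrightarrow> u \<le> T \<Longrightarrow>
      norm (y u - y s - incr A s u (y s)) \<le> E * (u - s) powr \<theta>"
    using hoelder_solution_euler_bound[OF _ y] t by auto
  define g where "g r = \<Phi> r t (y r)" for r
  have "g t = g 0"
  proof (rule eq_if_locally_hoelder_gt_1)
    show "0 \<le> t" "1 < \<theta> * \<gamma>" using t \<gamma> by (auto simp: ac_simps)
    fix s assume s: "s \<in> {0..t}"
    obtain D where "0 \<le> D" and D: "\<And>r. r \<in> {0..t} \<Longrightarrow> \<bar>r - s\<bar> \<le> h \<Longrightarrow>
        \<exists>p. norm p \<le> 2 * R + 1 \<and> norm (p - y s) \<le> D * \<bar>r - s\<bar> powr \<theta> \<and> \<Phi> r t (y r) = \<Phi> s t p"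
      using solution_shadowed_by_flow[OF R \<open>0 \<le> E\<close> euler s] t by auto
    have "s \<in> {0..T}" "t \<in> {s..T}" using s t by auto
    then have "holder_on \<gamma> (cball 0 (2 * R + 1)) (\<Phi> s t)"
      using flow_holder bounded_cball unfolding flow_locally_holder_def by blast
    then obtain H where H: "\<forall>a\<in>cball 0 (2 * R + 1). \<forall>b\<in>cball 0 (2 * R + 1).
        norm (\<Phi> s t a - \<Phi> s t b) \<le> H * norm (a - b) powr \<gamma>"
      unfolding holder_on_def by blast
    have "norm (g r - g s) \<le> (\<bar>H\<bar> * D powr \<gamma>) * \<bar>r - s\<bar> powr (\<theta> * \<gamma>)"
      if r: "r \<in> {0..t}" "\<bar>r - s\<bar> \<le> h" for r
    proof -
      obtain p where p: "norm p \<le> 2 * R + 1" "norm (p - y s) \<le> D * \<bar>r - s\<bar> powr \<theta>"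
          and "g r = \<Phi> s t p"
        using D[OF r] by (auto simp: g_def)
      moreover have "norm (y s) \<le> 2 * R + 1" using R \<open>s \<in> {0..T}\<close> by fastforce
      ultimately have "norm (g r - g s) \<le> H * norm (p - y s) powr \<gamma>"
        using H by (simp add: g_def)
      also have "\<dots> \<le> \<bar>H\<bar> * (D * \<bar>r - s\<bar> powr \<theta>) powr \<gamma>"
        using p \<gamma> by (intro mult_mono powr_mono2) auto
      also have "\<dots> = (\<bar>H\<bar> * D powr \<gamma>) * \<bar>r - s\<bar> powr (\<theta> * \<gamma>)"
        using \<open>0 \<le> D\<close> by (simp add: powr_mult powr_powr)
      finally show ?thesis .
    qed
    then show "\<exists>H\<ge>0. \<exists>\<delta>>0. \<forall>r\<in>{0..t}. \<bar>r - s\<bar> \<le> \<delta> \<longrightarrow> norm (g r - g s) \<le> H * \<bar>r - s\<bar> powr (\<theta> * \<gamma>)"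
      using h_pos by (intro exI[of _ "\<bar>H\<bar> * D powr \<gamma>"] exI[of _ h]) auto
  qed
  then show ?thesis using flow_start t y(2) by (simp add: g_def yde_solution_def)
qed

end

lemma young_field_if_field_holder:
  fixes A :: "real \<Rightarrow> 'a::real_normed_vector \<Rightarrow> 'a"
  assumes "field_holder T \<alpha> \<beta> lam A"
    and "0 < \<alpha>" "0 < \<beta>" "\<beta> < 1" "0 < lam" "\<beta> + lam \<le> 1" "1 < \<alpha> * (1 + \<beta>)"
  obtains C where "young_field T \<alpha> \<beta> lam C A"
proof -
  obtain C0 where C0: "\<forall>s t. 0 \<le> s \<and> s < t \<and> t \<le> T \<longrightarrow>
      norm (incr A s t 0) \<le> C0 * \<bar>t - s\<bar> powr \<alpha> \<and>
      (\<forall>R\<ge>1. \<forall>x y. x \<noteq> y \<and> norm x \<le> R \<and> norm y \<le> R \<longrightarrow>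
        norm (incr A s t x - incr A s t y) \<le> C0 * \<bar>t - s\<bar> powr \<alpha> * R powr lam * norm (x - y) powr \<beta>)"
    using assms(1) unfolding field_holder_def by blast
  define C where "C = max C0 0"
  have C_ge: "C0 * c \<le> C * c" if "0 \<le> c" for c
    using that by (simp add: C_def mult_right_mono)
  have "young_field T \<alpha> \<beta> lam C A"
  proof unfold_locales
    fix s t assume st: "0 \<le> s" "s \<le> t" "t \<le> T"
    show "norm (incr A s t 0) \<le> C * (t - s) powr \<alpha>"
    proof (cases "s = t")
      case False
      then have "norm (incr A s t 0) \<le> C0 * (t - s) powr \<alpha>" using C0 st by auto
      moreover have "C0 * (t - s) powr \<alpha> \<le> C * (t - s) powr \<alpha>" by (rule C_ge) simp
      ultimately show ?thesis by linarith
    qed simp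
  next
    fix s t R and x y :: 'a
    assume st: "0 \<le> s" "s \<le> t" "t \<le> T" and "1 \<le> R" "norm x \<le> R" "norm y \<le> R"
    show "norm (incr A s t x - incr A s t y) \<le> C * (t - s) powr \<alpha> * R powr lam * norm (x - y) powr \<beta>"
    proof (cases "s = t \<or> x = y")
      case False
      then have "norm (incr A s t x - incr A s t y) \<le> C0 * ((t - s) powr \<alpha> * R powr lam * norm (x - y) powr \<beta>)"
        using C0 st \<open>1 \<le> R\<close> \<open>norm x \<le> R\<close> \<open>norm y \<le> R\<close> by (auto simp: mult.assoc)
      moreover have "C0 * ((t - s) powr \<alpha> * R powr lam * norm (x - y) powr \<beta>)
          \<le> C * ((t - s) powr \<alpha> * R powr lam * norm (x - y) powr \<beta>)"
        by (rule C_ge) simp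
      ultimately show ?thesis by (simp add: mult.assoc)
    qed (auto simp: C_def)
  qed (use assms in \<open>auto simp: C_def\<close>)
  then show ?thesis using that by blast
qed

theorem mainTheorem18:
  fixes T \<alpha> \<beta> lam \<gamma> :: real
    and A :: "real \<Rightarrow> 'a::{banach, second_countable_topology} \<Rightarrow> 'a"
    and \<Phi> \<Psi> :: "real \<Rightarrow> real \<Rightarrow> 'a \<Rightarrow> 'a"
    and x0 :: 'a
  assumes "T > 0"
    and "0 < \<alpha>" "\<alpha> < 1" "0 < \<beta>" "\<beta> < 1" "0 < lam" "lam \<le> 1"
    and "\<alpha> * (1 + \<beta>) > 1" "\<beta> + lam \<le> 1"
    and "field_holder T \<alpha> \<beta> lam A"
    and "is_flow T \<alpha> A \<Phi> \<Psi>"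
    and "flow_locally_holder T \<gamma> \<Phi> \<Psi>"
    and "0 < \<gamma>" "\<gamma> < 1" "\<alpha> * \<gamma> * (1 + \<beta>) > 1"
  shows "\<exists>x. holder_path \<alpha> 0 T x \<and> yde_solution T A x0 x \<and>
           (\<forall>y. holder_path \<alpha> 0 T y \<and> yde_solution T A x0 y \<longrightarrow> (\<forall>t\<in>{0..T}. y t = x t))"
proof -
  obtain C where "young_field T \<alpha> \<beta> lam C A"
    using young_field_if_field_holder[OF assms(10,2,4,5,6,9,8)] by blast
  then interpret young_flow T \<alpha> \<beta> lam C A \<Phi> \<Psi>
    using \<open>is_flow T \<alpha> A \<Phi> \<Psi>\<close> by (simp add: young_flow_def young_flow_axioms_def)
  obtain h M where "young_flow_bounds T \<alpha> \<beta> lam C A \<Phi> \<Psi> h M"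
    using exists_flow_bounds by blast
  then interpret young_flow_bounds T \<alpha> \<beta> lam C A \<Phi> \<Psi> h M .
  have "0 \<in> {0..T}" using \<open>T > 0\<close> by simp
  show ?thesis
  proof (intro exI conjI allI impI ballI)
    show "holder_path \<alpha> 0 T (\<lambda>t. \<Phi> 0 t x0)" using flow_hoelder[OF \<open>0 \<in> {0..T}\<close>] .
    show "yde_solution T A x0 (\<lambda>t. \<Phi> 0 t x0)"
      using flow_start[OF \<open>0 \<in> {0..T}\<close>] flow_solves[OF \<open>0 \<in> {0..T}\<close>] by (simp add: yde_solution_def)
  next
    fix y t assume "holder_path \<alpha> 0 T y \<and> yde_solution T A x0 y" "t \<in> {0..T}"
    then show "y t = \<Phi> 0 t x0" using solution_eq_flow[OF assms(13,15,12)] by blast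
  qed
qed

end
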